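(* Let $q\ge5$ be odd. The $\mathrm{Un}\Gamma$-lines (lines meeting the twisted cubic $\mathcal{C}$ in exactly one point and contained in no osculating plane) form two orbits under $G_q$, each of size $(q^3-q)/2$, namely $\{\ell_j\varphi:\varphi\in G_q\}$, $j=1,2$, where $P_0=P(0,0,0,1)$, $\ell_1$ is the line through $P_0$ and $P(1,0,1,0)$, $\ell_2$ is the line through $P_0$ and $P(1,0,\rho,0)$, and $\rho$ is a non-square in $\mathbb{F}_q$. Moreover, $\ell_1$ and $\ell_2$ are fixed by the same subgroup of $G_q$, of size $2$, each element of which has a matrix of the form $\begin{pmatrix}1&0&0&0\\0&d&0&0\\0&0&d^2&0\\0&0&0&d^3\end{pmatrix}$, $d\in\{1,-1\}$.
   Context: $\mathrm{PG}(3,q)$ has points $P(x_0,x_1,x_2,x_3)$; $\boldsymbol{\pi}(c_0,c_1,c_2,c_3)$ is the plane $c_0x_0+c_1x_1+c_2x_2+c_3x_3=0$. The twisted cubic is $\mathcal{C}=\{P(t^3,t^2,t,1):t\in\mathbb{F}_q\}\cup\{P(1,0,0,0)\}$; the osculating planes are $\boldsymbol{\pi}(1,-3t,3t^2,-t^3)$, $t\in\mathbb{F}_q$, and $\boldsymbol{\pi}(0,0,0,1)$. $G_q$ is the group of projectivities mapping $\mathcal{C}$ to itself; for $q\ge5$ its elements are $x\mapsto xM$ on row coordinate vectors, $M=\begin{pmatrix} a^3&a^2c&ac^2&c^3\\ 3a^2b&a^2d+2abc&bc^2+2acd&3c^2d\\ 3ab^2&b^2c+2abd&ad^2+2bcd&3cd^2\\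 b^3&b^2d&bd^2&d^3\end{pmatrix}$, $ad-bc\ne0$, up to scalar. *)

theory Defs
  imports Main "HOL-Library.Cardinality"
begin

text \<open>A point P(x) of PG(3,q) is represented by the 1-dimensional
subspace it spans, a line by the 2-dimensional subspace it spans, and a
projectivity by its induced action on subspaces (so matrices differing by a
nonzero scalar give the same element).\<close>

type_synonym 'a vec4 = "'a \<times> 'a \<times> 'a \<times> 'a"

definition vzero :: "'a::field vec4" where
  "vzero = (0, 0, 0, 0)"

fun vadd :: "'a::field vec4 \<Rightarrow> 'a vec4 \<Rightarrow> 'a vec4" where
  "vadd (x0, x1, x2, x3) (y0, y1, y2, y3) = (x0 + y0, x1 + y1, x2 + y2, x3 + y3)"

fun smul :: "'a::field \<Rightarrow> 'a vec4 \<Rightarrow> 'a vec4" where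
  "smul c (x0, x1, x2, x3) = (c * x0, c * x1, c * x2, c * x3)"

fun dot4 :: "'a::field vec4 \<Rightarrow> 'a vec4 \<Rightarrow> 'a" where
  "dot4 (c0, c1, c2, c3) (x0, x1, x2, x3) = c0 * x0 + c1 * x1 + c2 * x2 + c3 * x3"

definition subspaces :: "'a::field vec4 set set" where
  "subspaces = {S. vzero \<in> S \<and> (\<forall>x\<in>S. \<forall>y\<in>S. vadd x y \<in> S) \<and> (\<forall>c. \<forall>x\<in>S. smul c x \<in> S)}"

definition pt :: "'a::field vec4 \<Rightarrow> 'a vec4 set" where
  "pt u = {smul c u | c. True}"

definition span2 :: "'a::field vec4 \<Rightarrow> 'a vec4 \<Rightarrow> 'a vec4 set" where
  "span2 u v = {vadd (smul a u) (smul b v) | a b. True}"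

definition indep2 :: "'a::field vec4 \<Rightarrow> 'a vec4 \<Rightarrow> bool" where
  "indep2 u v \<longleftrightarrow> (\<forall>a b. vadd (smul a u) (smul b v) = vzero \<longrightarrow> a = 0 \<and> b = 0)"

definition lines :: "'a::field vec4 set set" where
  "lines = {span2 u v | u v. indep2 u v}"

definition plane :: "'a::field vec4 \<Rightarrow> 'a vec4 set" where
  "plane c = {x. dot4 c x = 0}"

definition cubic_points :: "'a::field vec4 set set" where
  "cubic_points = {pt (t^3, t^2, t, 1) | t. True} \<union> {pt (1, 0, 0, 0)}"

definition osc_planes :: "'a::field vec4 set set" where
  "osc_planes = {plane (1, - 3 * t, 3 * t^2, - (t^3)) | t. True} \<union> {plane (0, 0, 0, 1)}"

definition UnGamma_lines :: "'a::field vec4 set set" where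
  "UnGamma_lines = {L \<in> lines. card {P \<in> cubic_points. P \<subseteq> L} = 1 \<and>
                                (\<forall>\<pi>\<in>osc_planes. \<not> L \<subseteq> \<pi>)}"

definition Mq :: "'a::field \<Rightarrow> 'a \<Rightarrow> 'a \<Rightarrow> 'a \<Rightarrow> nat \<Rightarrow> nat \<Rightarrow> 'a" where
  "Mq a b c d i j =
     [[a^3,       a^2 * c,                   a * c^2,                   c^3],
      [3*a^2*b,   a^2*d + 2*a*b*c,           b*c^2 + 2*a*c*d,           3*c^2*d],
      [3*a*b^2,   b^2*c + 2*a*b*d,           a*d^2 + 2*b*c*d,           3*c*d^2],
      [b^3,       b^2 * d,                   b * d^2,                   d^3]] ! i ! j"

fun vecmat :: "'a::field vec4 \<Rightarrow> (nat \<Rightarrow> nat \<Rightarrow> 'a) \<Rightarrow> 'a vec4" where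
  "vecmat (x0, x1, x2, x3) M =
     (x0 * M 0 0 + x1 * M 1 0 + x2 * M 2 0 + x3 * M 3 0,
      x0 * M 0 1 + x1 * M 1 1 + x2 * M 2 1 + x3 * M 3 1,
      x0 * M 0 2 + x1 * M 1 2 + x2 * M 2 2 + x3 * M 3 2,
      x0 * M 0 3 + x1 * M 1 3 + x2 * M 2 3 + x3 * M 3 3)"

definition gmap :: "'a::field \<Rightarrow> 'a \<Rightarrow> 'a \<Rightarrow> 'a \<Rightarrow> 'a vec4 set \<Rightarrow> 'a vec4 set" where
  "gmap a b c d = (\<lambda>S. if S \<in> subspaces then (\<lambda>x. vecmat x (Mq a b c d)) ` S else undefined)"

definition Gq :: "('a::field vec4 set \<Rightarrow> 'a vec4 set) set" where
  "Gq = {gmap a b c d | a b c d. a * d - b * c \<noteq> 0}"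

definition Gorbit :: "'a::field vec4 set \<Rightarrow> 'a vec4 set set" where
  "Gorbit L = (\<lambda>\<phi>. \<phi> L) ` Gq"

definition Gstab :: "'a::field vec4 set \<Rightarrow> ('a vec4 set \<Rightarrow> 'a vec4 set) set" where
  "Gstab L = {\<phi> \<in> Gq. \<phi> L = L}"

end

(* G_q is the image of GL(2,q) acting on binary cubic forms: M(a,b,c,d) maps the point of the
   cubic with homogeneous parameter (x, y) to the one with parameter (a x + b y, c x + d y), and
   transforms the osculating planes in the same way, so G_q permutes the UnGamma-lines.
   Moving the unique cubic point of an UnGamma-line to P0 = P(0,0,0,1), the line becomes the
   join of P0 and P(1, v1, v2, 0) with v2 != v1^2; the lower triangular matrix with rows (1, 0)
   and (v1, e) maps the line l_r through P0 and P(1,0,r,0) onto this join when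
   v2 - v1^2 = r e^2. Since every nonzero element is a square or rho times a square, every
   UnGamma-line lies in the orbit of l_1 or of l_rho. Conversely, a matrix mapping l_r into
   l_r' is diagonal, diag(a, d), with r d^2 = r' a^2. So the two orbits are disjoint, and the
   matrices fixing l_r are the 2(q - 1) multiples of diag(1, 1) and diag(1, -1), which induce
   the two projectivities diag(1, d, d^2, d^3), d = 1, -1. Each orbit therefore has
   |GL(2,q)| / (2(q - 1)) = (q^3 - q)/2 lines. *)

theory Submission
  imports Defs
begin

section \<open>Squares in finite fields of odd order\<close>

lemma card_eq_mult_card_image:
  assumes "finite A" and "\<And>x. x \<in> A \<Longrightarrow> card {y \<in> A. f y = f x} = k"
  shows "card A = k * card (f ` A)"
proof -
  have "card A = (\<Sum>z \<in> f ` A. card {y \<in> A. f y = z})"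
    using sum.image_gen[OF assms(1), of "\<lambda>_. 1::nat" f] by simp
  also have "\<dots> = (\<Sum>z \<in> f ` A. k)"
    using assms(2) by (intro sum.cong) auto
  finally show ?thesis by simp
qed

text \<open>If 2 = 0, then y (y + 1) = x (x + 1) holds exactly for y \<in> {x, x + 1}, which pairs off
  the elements of the field.\<close>

lemma two_neq_zero_if_odd_card:
  assumes "odd CARD('a::{field,finite})"
  shows "(2::'a) \<noteq> 0"
proof
  assume two: "(2::'a) = 0"
  have "card {y. y * (y + 1) = x * (x + 1)} = 2" for x :: 'a
  proof -
    have "y * (y + 1) = x * (x + 1) \<longleftrightarrow> y = x \<or> y = x + 1" for y
    proof -
      have "y * (y + 1) - x * (x + 1) = (y - x) * (y - (x + 1)) + 2 * (y + x * y - x^2 - x)"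
        by (simp add: algebra_simps power2_eq_square)
      then have "y * (y + 1) = x * (x + 1) \<longleftrightarrow> (y - x) * (y - (x + 1)) = 0"
        using two by (metis add_0_right eq_iff_diff_eq_0 mult_zero_left)
      then show ?thesis by simp
    qed
    then have "{y. y * (y + 1) = x * (x + 1)} = {x, x + 1}"
      by blast
    then show ?thesis by simp
  qed
  then have "CARD('a) = 2 * card (range (\<lambda>x::'a. x * (x + 1)))"
    by (intro card_eq_mult_card_image) simp_all
  with assms show False by simp
qed

lemma nonsquare_neq_zero: "\<not> (\<exists>x. x^2 = \<rho>) \<Longrightarrow> \<rho> \<noteq> (0::'a::field)"
  by auto

lemma card_nonzero_squares:
  assumes "odd CARD('a::{field,finite})"
  shows "card (UNIV - {0::'a}) = 2 * card ((\<lambda>x. x^2) ` (UNIV - {0::'a}))"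
proof (rule card_eq_mult_card_image)
  fix x :: 'a assume x: "x \<in> UNIV - {0}"
  then have "x \<noteq> - x"
    using two_neq_zero_if_odd_card[OF assms] by (simp add: eq_neg_iff_add_eq_0 flip: mult_2)
  moreover have "{y \<in> UNIV - {0}. y^2 = x^2} = {x, - x}"
    using x by (auto simp: power2_eq_iff)
  ultimately show "card {y \<in> UNIV - {0}. y^2 = x^2} = 2"
    by simp
qed simp

lemma square_class_cases:
  fixes \<rho> \<delta> :: "'a::{field,finite}"
  assumes "odd CARD('a)" and nonsq: "\<not> (\<exists>x. x^2 = \<rho>)" and "\<delta> \<noteq> 0"
  obtains r e where "r \<in> {1, \<rho>}" and "e \<noteq> 0" and "\<delta> = r * e^2"
proof (cases "\<exists>e. e^2 = \<delta>")
  case True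
  then obtain e where "e^2 = \<delta>" by blast
  moreover have "e \<noteq> 0"
    using \<open>\<delta> \<noteq> 0\<close> calculation by auto
  ultimately show ?thesis
    by (intro that[of 1 e]) simp_all
next
  case False
  let ?N = "UNIV - {0::'a}"
  let ?S = "(\<lambda>x. x^2) ` ?N"
  let ?T = "(\<lambda>s. \<rho> * s) ` ?S"
  have "\<rho> \<noteq> 0"
    using nonsq by (rule nonsquare_neq_zero)
  then have "card ?T = card ?S"
    by (intro card_image) (simp add: inj_on_def)
  moreover have "?S \<inter> ?T = {}"
  proof (rule ccontr)
    assume "?S \<inter> ?T \<noteq> {}"
    then obtain x y :: 'a where "y \<noteq> 0" and "x^2 = \<rho> * y^2" by auto
    then have "(x / y)^2 = \<rho>" by (simp add: power_divide)
    with nonsq show False by blast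
  qed
  moreover have "?S \<union> ?T \<subseteq> ?N"
    using \<open>\<rho> \<noteq> 0\<close> by auto
  ultimately have "?S \<union> ?T = ?N"
    using card_nonzero_squares[OF assms(1)] by (intro card_subset_eq) (simp_all add: card_Un_disjoint)
  moreover have "\<delta> \<notin> ?S"
    using False by blast
  ultimately have "\<delta> \<in> ?T"
    using \<open>\<delta> \<noteq> 0\<close> by blast
  then obtain e where "e \<noteq> 0" and "\<delta> = \<rho> * e^2"
    by blast
  then show ?thesis
    by (intro that[of \<rho> e]) simp_all
qed
section \<open>Points and lines of PG(3,q)\<close>

lemma smul_smul: "smul a (smul b x) = smul (a * b) x"
  by (cases x rule: prod_cases4) simp

lemma smul_one [simp]: "smul 1 x = x"
  by (cases x rule: prod_cases4) simp

lemma vadd_commute: "vadd x y = vadd y x"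
  by (cases x rule: prod_cases4; cases y rule: prod_cases4) (simp add: add.commute)

lemma vadd_smul_same: "vadd (smul a w) (smul b w) = smul (a + b) w"
  by (cases w rule: prod_cases4) (simp add: algebra_simps)

lemma dot4_smul: "dot4 (smul k c) z = k * dot4 c z"
  by (cases c rule: prod_cases4; cases z rule: prod_cases4) (simp add: algebra_simps)

lemma plane_smul: "k \<noteq> 0 \<Longrightarrow> plane (smul k c) = plane c"
  unfolding plane_def by (simp add: dot4_smul)

lemma subspace_smul: "S \<in> subspaces \<Longrightarrow> x \<in> S \<Longrightarrow> smul c x \<in> S"
  unfolding subspaces_def by blast

lemma smul_image_subspace:
  assumes "S \<in> subspaces" and "k \<noteq> 0"
  shows "smul k ` S = S"
proof
  show "smul k ` S \<subseteq> S"
    using subspace_smul[OF assms(1)] by blast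
  show "S \<subseteq> smul k ` S"
  proof
    fix x assume "x \<in> S"
    then have "smul (inverse k) x \<in> S"
      by (rule subspace_smul[OF assms(1)])
    moreover have "x = smul k (smul (inverse k) x)"
      using assms(2) by (simp add: smul_smul)
    ultimately show "x \<in> smul k ` S" by blast
  qed
qed

lemma mem_span2: "x \<in> span2 u v \<longleftrightarrow> (\<exists>a b. x = vadd (smul a u) (smul b v))"
  unfolding span2_def by blast

lemma span2_in_subspaces: "span2 u v \<in> subspaces"
  unfolding subspaces_def mem_Collect_eq
proof (intro conjI ballI allI)
  have "vzero = vadd (smul 0 u) (smul 0 v)"
    by (cases u rule: prod_cases4; cases v rule: prod_cases4) (simp add: vzero_def)
  then show "vzero \<in> span2 u v"
    unfolding mem_span2 by blast
next
  fix x y assume "x \<in> span2 u v" "y \<in> span2 u v"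
  then obtain a b a' b' where "x = vadd (smul a u) (smul b v)" "y = vadd (smul a' u) (smul b' v)"
    unfolding mem_span2 by blast
  then have "vadd x y = vadd (smul (a + a') u) (smul (b + b') v)"
    by (cases u rule: prod_cases4; cases v rule: prod_cases4) (simp add: algebra_simps)
  then show "vadd x y \<in> span2 u v" unfolding mem_span2 by blast
next
  fix c x assume "x \<in> span2 u v"
  then obtain a b where "x = vadd (smul a u) (smul b v)"
    unfolding mem_span2 by blast
  then have "smul c x = vadd (smul (c * a) u) (smul (c * b) v)"
    by (cases u rule: prod_cases4; cases v rule: prod_cases4) (simp add: algebra_simps)
  then show "smul c x \<in> span2 u v" unfolding mem_span2 by blast
qed

lemma lines_subspaces: "L \<in> lines \<Longrightarrow> L \<in> subspaces"
  unfolding lines_def using span2_in_subspaces by blast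

lemma span2_commute: "span2 u v = span2 v u"
  unfolding set_eq_iff mem_span2 by (metis vadd_commute)

lemma span2_change_basis:
  assumes "k \<noteq> 0" and "l \<noteq> 0"
  shows "span2 (smul k u) (vadd (smul l w) (smul m u)) = span2 u w"
proof (intro equalityI subsetI)
  fix x assume "x \<in> span2 (smul k u) (vadd (smul l w) (smul m u))"
  then obtain a b where "x = vadd (smul a (smul k u)) (smul b (vadd (smul l w) (smul m u)))"
    unfolding mem_span2 by blast
  then have "x = vadd (smul (a * k + b * m) u) (smul (b * l) w)"
    by (cases u rule: prod_cases4; cases w rule: prod_cases4) (simp add: algebra_simps)
  then show "x \<in> span2 u w" unfolding mem_span2 by blast
next
  fix x assume "x \<in> span2 u w"
  then obtain a b where "x = vadd (smul a u) (smul b w)"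
    unfolding mem_span2 by blast
  then have "x = vadd (smul ((a - b / l * m) / k) (smul k u)) (smul (b / l) (vadd (smul l w) (smul m u)))"
    using assms by (cases u rule: prod_cases4; cases w rule: prod_cases4) (simp add: field_simps)
  then show "x \<in> span2 (smul k u) (vadd (smul l w) (smul m u))" unfolding mem_span2 by blast
qed

lemma image_span2:
  assumes "\<And>x y. f (vadd x y) = vadd (f x) (f y)" and "\<And>c x. f (smul c x) = smul c (f x)"
  shows "f ` span2 u v = span2 (f u) (f v)"
proof (intro equalityI subsetI)
  fix x assume "x \<in> f ` span2 u v"
  then obtain a b where "x = f (vadd (smul a u) (smul b v))"
    by (auto simp: mem_span2)
  then show "x \<in> span2 (f u) (f v)"
    unfolding mem_span2 assms by blast
next
  fix x assume "x \<in> span2 (f u) (f v)"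
  then obtain a b where "x = f (vadd (smul a u) (smul b v))"
    unfolding mem_span2 assms by blast
  moreover have "vadd (smul a u) (smul b v) \<in> span2 u v"
    unfolding mem_span2 by blast
  ultimately show "x \<in> f ` span2 u v" by blast
qed

lemma mem_pt: "x \<in> pt w \<longleftrightarrow> (\<exists>c. x = smul c w)"
  unfolding pt_def by blast

lemma pt_self: "w \<in> pt w"
proof -
  have "w = smul 1 w" by simp
  then show ?thesis unfolding mem_pt by blast
qed

lemma pt_eq_span2: "pt w = span2 w w"
proof (intro equalityI subsetI)
  fix x assume "x \<in> pt w"
  then obtain c where "x = smul c w"
    unfolding mem_pt by blast
  then have "x = vadd (smul c w) (smul 0 w)"
    by (simp add: vadd_smul_same)
  then show "x \<in> span2 w w"
    unfolding mem_span2 by blast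
next
  fix x assume "x \<in> span2 w w"
  then obtain a b where "x = smul (a + b) w"
    unfolding mem_span2 vadd_smul_same by blast
  then show "x \<in> pt w"
    unfolding mem_pt by blast
qed

lemma pt_in_subspaces: "pt w \<in> subspaces"
  unfolding pt_eq_span2 by (rule span2_in_subspaces)

lemma image_pt:
  assumes "\<And>x y. f (vadd x y) = vadd (f x) (f y)" and "\<And>c x. f (smul c x) = smul c (f x)"
  shows "f ` pt w = pt (f w)"
  unfolding pt_eq_span2 using assms by (rule image_span2)

lemma pt_subset_iff:
  assumes "S \<in> subspaces"
  shows "pt w \<subseteq> S \<longleftrightarrow> w \<in> S"
  using pt_self subspace_smul[OF assms] unfolding subset_iff mem_pt by blast

lemma pt_smul:
  assumes "k \<noteq> 0"
  shows "pt (smul k w) = pt w"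
proof
  have "smul k w \<in> pt w"
    unfolding mem_pt by blast
  then show "pt (smul k w) \<subseteq> pt w"
    by (simp add: pt_subset_iff[OF pt_in_subspaces])
  have "w = smul (inverse k) (smul k w)"
    using assms by (simp add: smul_smul)
  then have "w \<in> pt (smul k w)"
    unfolding mem_pt by blast
  then show "pt w \<subseteq> pt (smul k w)"
    by (simp add: pt_subset_iff[OF pt_in_subspaces])
qed

section \<open>The action of GL(2,q)\<close>

type_synonym 'a mat2 = "'a \<times> 'a \<times> 'a \<times> 'a"

fun mat2_mult :: "'a::field mat2 \<Rightarrow> 'a mat2 \<Rightarrow> 'a mat2" where
  "mat2_mult (a', b', c', d') (a, b, c, d) =
     (a' * a + b' * c, a' * b + b' * d, c' * a + d' * c, c' * b + d' * d)"

fun mat2_det :: "'a::field mat2 \<Rightarrow> 'a" where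
  "mat2_det (a, b, c, d) = a * d - b * c"

fun mat2_inv :: "'a::field mat2 \<Rightarrow> 'a mat2" where
  "mat2_inv (a, b, c, d) = (let k = inverse (a * d - b * c) in (k * d, - (k * b), - (k * c), k * a))"

fun mat2_apply :: "'a::field mat2 \<Rightarrow> 'a \<times> 'a \<Rightarrow> 'a \<times> 'a" where
  "mat2_apply (a, b, c, d) (x, y) = (a * x + b * y, c * x + d * y)"

definition GL2 :: "'a::field mat2 set" where
  "GL2 = {A. mat2_det A \<noteq> 0}"

lemma mem_GL2 [simp]: "(a, b, c, d) \<in> GL2 \<longleftrightarrow> a * d - b * c \<noteq> 0"
  by (simp add: GL2_def)

lemma mat2_mult_assoc: "mat2_mult (mat2_mult A B) C = mat2_mult A (mat2_mult B C)"
  by (cases A rule: prod_cases4; cases B rule: prod_cases4; cases C rule: prod_cases4)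
     (simp add: algebra_simps)

lemma mat2_mult_one_left: "mat2_mult (1, 0, 0, 1) A = A"
  by (cases A rule: prod_cases4) simp

lemma mat2_det_mult: "mat2_det (mat2_mult A B) = mat2_det A * mat2_det B"
  by (cases A rule: prod_cases4; cases B rule: prod_cases4) (simp add: algebra_simps)

lemma mat2_mult_GL2: "A \<in> GL2 \<Longrightarrow> B \<in> GL2 \<Longrightarrow> mat2_mult A B \<in> GL2"
  by (simp add: GL2_def mat2_det_mult)

lemma mat2_mult_inv:
  assumes "A \<in> GL2"
  shows "mat2_mult A (mat2_inv A) = (1, 0, 0, 1)"
proof (cases A rule: prod_cases4)
  case (fields a b c d)
  define k where "k = inverse (a * d - b * c)"
  have "k * (a * d - b * c) = 1"
    using assms by (simp add: fields k_def del: eq_iff_diff_eq_0)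
  then show ?thesis
    by (simp add: fields Let_def flip: k_def) algebra
qed

lemma mat2_inv_mult:
  assumes "A \<in> GL2"
  shows "mat2_mult (mat2_inv A) A = (1, 0, 0, 1)"
proof (cases A rule: prod_cases4)
  case (fields a b c d)
  define k where "k = inverse (a * d - b * c)"
  have "k * (a * d - b * c) = 1"
    using assms by (simp add: fields k_def del: eq_iff_diff_eq_0)
  then show ?thesis
    by (simp add: fields Let_def flip: k_def) algebra
qed

lemma mat2_inv_GL2:
  assumes "A \<in> GL2"
  shows "mat2_inv A \<in> GL2"
  using mat2_det_mult[of A "mat2_inv A"] by (auto simp: GL2_def mat2_mult_inv[OF assms])

lemma inj_mat2_mult: "A \<in> GL2 \<Longrightarrow> inj (mat2_mult A)"
  by (rule inj_on_inverseI[of _ "mat2_mult (mat2_inv A)"])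
     (simp add: mat2_mult_assoc[symmetric] mat2_inv_mult mat2_mult_one_left)

lemma card_nonsingular_second_rows:
  assumes "(a, b) \<noteq> (0::'a::{field,finite}, 0)"
  shows "card {(c, d). a * d - b * c \<noteq> (0::'a)} = CARD('a)^2 - CARD('a)"
proof -
  have "{(c, d). a * d - b * c = (0::'a)} = (\<lambda>k. (k * a, k * b)) ` UNIV"
  proof (intro equalityI subsetI)
    fix p assume "p \<in> {(c, d). a * d - b * c = (0::'a)}"
    then obtain c d where p: "p = (c, d)" and "a * d = b * c"
      by auto
    then have "p = ((if a = 0 then d / b else c / a) * a, (if a = 0 then d / b else c / a) * b)"
      using assms by (auto simp: field_simps)
    then show "p \<in> range (\<lambda>k. (k * a, k * b))"
      by blast
  qed auto
  moreover have "inj (\<lambda>k. (k * a, k * b))"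
    using assms by (auto simp: inj_def)
  ultimately have "card {(c, d). a * d - b * c = (0::'a)} = CARD('a)"
    by (simp add: card_image)
  moreover have "{(c, d). a * d - b * c \<noteq> (0::'a)} = UNIV - {(c, d). a * d - b * c = 0}"
    by auto
  ultimately show ?thesis
    by (simp add: card_Diff_subset power2_eq_square)
qed

lemma card_GL2: "card (GL2 :: 'a::{field,finite} mat2 set) = (CARD('a)^2 - CARD('a)) * (CARD('a)^2 - 1)"
proof -
  let ?row = "\<lambda>A :: 'a mat2. (fst A, fst (snd A))"
  have "card (GL2 :: 'a mat2 set) = (CARD('a)^2 - CARD('a)) * card (?row ` GL2)"
  proof (rule card_eq_mult_card_image)
    fix A :: "'a mat2" assume "A \<in> GL2"
    obtain a b c d where A: "A = (a, b, c, d)"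
      by (cases A rule: prod_cases4)
    then have "(a, b) \<noteq> (0, 0)"
      using \<open>A \<in> GL2\<close> by auto
    have "{B \<in> GL2. ?row B = ?row A} = (\<lambda>x. (a, b, x)) ` {(c, d). a * d - b * c \<noteq> 0}"
      by (auto simp: A GL2_def)
    moreover have "inj (\<lambda>x :: 'a \<times> 'a. (a, b, x))"
      by (simp add: inj_def)
    ultimately show "card {B \<in> GL2. ?row B = ?row A} = CARD('a)^2 - CARD('a)"
      using card_nonsingular_second_rows[OF \<open>(a, b) \<noteq> (0, 0)\<close>] by (simp add: card_image inj_on_subset)
  qed simp
  moreover have "?row ` GL2 = UNIV - {(0, 0)}"
  proof (intro equalityI subsetI)
    fix p assume "p \<in> ?row ` GL2"
    then show "p \<in> UNIV - {(0, 0)}"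
      by (auto simp: GL2_def)
  next
    fix p :: "'a \<times> 'a" assume "p \<in> UNIV - {(0, 0)}"
    then obtain a b where p: "p = (a, b)" and "(a, b) \<noteq> (0, 0)"
      by (cases p) auto
    then have "(if a = 0 then (a, b, 1, 0) else (a, b, 0, 1)) \<in> GL2"
      by auto
    moreover have "p = ?row (if a = 0 then (a, b, 1, 0) else (a, b, 0, 1))"
      by (simp add: p)
    ultimately show "p \<in> ?row ` GL2"
      by (rule rev_image_eqI)
  qed
  ultimately show ?thesis
    by (simp add: card_Diff_subset power2_eq_square)
qed

lemma mat2_apply_mult: "mat2_apply B (mat2_apply A v) = mat2_apply (mat2_mult B A) v"
  by (cases A rule: prod_cases4; cases B rule: prod_cases4; cases v) (simp add: algebra_simps)

lemma mat2_apply_eq_0_iff: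
  assumes "A \<in> GL2"
  shows "mat2_apply A v = (0, 0) \<longleftrightarrow> v = (0, 0)"
proof
  assume "mat2_apply A v = (0, 0)"
  then have "mat2_apply (mat2_inv A) (mat2_apply A v) = (0, 0)"
    by (cases "mat2_inv A" rule: prod_cases4) simp
  then show "v = (0, 0)"
    by (cases v) (simp add: mat2_apply_mult mat2_inv_mult[OF assms])
qed (cases A rule: prod_cases4, simp)

fun cubic_act :: "'a::field mat2 \<Rightarrow> 'a vec4 \<Rightarrow> 'a vec4" where
  "cubic_act (a, b, c, d) x = vecmat x (Mq a b c d)"

lemma cubic_act_expand:
  "cubic_act (a, b, c, d) (x0, x1, x2, x3) =
     (x0 * a^3 + x1 * (3*a^2*b) + x2 * (3*a*b^2) + x3 * b^3,
      x0 * (a^2*c) + x1 * (a^2*d + 2*a*b*c) + x2 * (b^2*c + 2*a*b*d) + x3 * (b^2*d),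
      x0 * (a*c^2) + x1 * (b*c^2 + 2*a*c*d) + x2 * (a*d^2 + 2*b*c*d) + x3 * (b*d^2),
      x0 * c^3 + x1 * (3*c^2*d) + x2 * (3*c*d^2) + x3 * d^3)"
  by (simp add: Mq_def)

declare cubic_act.simps [simp del]

lemma cubic_act_mult: "cubic_act B (cubic_act A x) = cubic_act (mat2_mult B A) x"
  by (cases A rule: prod_cases4; cases B rule: prod_cases4; cases x rule: prod_cases4)
     (simp only: cubic_act_expand mat2_mult.simps, simp add: algebra_simps power2_eq_square power3_eq_cube)

lemma cubic_act_one: "cubic_act (1, 0, 0, 1) x = x"
  by (cases x rule: prod_cases4) (simp add: cubic_act_expand)

lemma cubic_act_scalar: "cubic_act (k, 0, 0, k) x = smul (k^3) x"
  by (cases x rule: prod_cases4) (simp add: cubic_act_expand algebra_simps power2_eq_square power3_eq_cube)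

lemma cubic_act_inv_left: "A \<in> GL2 \<Longrightarrow> cubic_act (mat2_inv A) (cubic_act A x) = x"
  by (simp add: cubic_act_mult mat2_inv_mult cubic_act_one)

lemma cubic_act_inv_right: "A \<in> GL2 \<Longrightarrow> cubic_act A (cubic_act (mat2_inv A) x) = x"
  by (simp add: cubic_act_mult mat2_mult_inv cubic_act_one)

lemma image_cubic_act_inv_left: "A \<in> GL2 \<Longrightarrow> cubic_act (mat2_inv A) ` cubic_act A ` S = S"
  by (simp add: image_image cubic_act_inv_left)

lemma image_cubic_act_inv_right: "A \<in> GL2 \<Longrightarrow> cubic_act A ` cubic_act (mat2_inv A) ` S = S"
  by (simp add: image_image cubic_act_inv_right)

lemma image_cubic_act_mult: "cubic_act (mat2_mult B A) ` S = cubic_act B ` cubic_act A ` S"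
  by (simp add: image_image cubic_act_mult)

lemma inj_cubic_act: "A \<in> GL2 \<Longrightarrow> inj (cubic_act A)"
  by (metis injI cubic_act_inv_left)

lemma cubic_act_vadd: "cubic_act A (vadd x y) = vadd (cubic_act A x) (cubic_act A y)"
  by (cases A rule: prod_cases4; cases x rule: prod_cases4; cases y rule: prod_cases4)
     (simp add: cubic_act_expand algebra_simps)

lemma cubic_act_smul: "cubic_act A (smul c x) = smul c (cubic_act A x)"
  by (cases A rule: prod_cases4; cases x rule: prod_cases4) (simp add: cubic_act_expand algebra_simps)

lemma cubic_act_vzero: "cubic_act A vzero = vzero"
  by (cases A rule: prod_cases4) (simp add: vzero_def cubic_act_expand)

lemma image_cubic_act_span2: "cubic_act A ` span2 u v = span2 (cubic_act A u) (cubic_act A v)"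
  by (rule image_span2) (simp_all add: cubic_act_vadd cubic_act_smul)

lemma image_cubic_act_pt: "cubic_act A ` pt w = pt (cubic_act A w)"
  by (rule image_pt) (simp_all add: cubic_act_vadd cubic_act_smul)

lemma gmap_eq_image: "S \<in> subspaces \<Longrightarrow> gmap a b c d S = cubic_act (a, b, c, d) ` S"
  by (simp add: gmap_def cubic_act.simps)

lemma gmap_in_Gq: "(a, b, c, d) \<in> GL2 \<Longrightarrow> gmap a b c d \<in> Gq"
  unfolding Gq_def by auto

lemma Gorbit_eq_image:
  assumes "S \<in> subspaces"
  shows "Gorbit S = (\<lambda>A. cubic_act A ` S) ` GL2"
proof (intro equalityI subsetI)
  fix L assume "L \<in> Gorbit S"
  then obtain a b c d where "a * d - b * c \<noteq> 0" and "L = gmap a b c d S"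
    unfolding Gorbit_def Gq_def by blast
  then show "L \<in> (\<lambda>A. cubic_act A ` S) ` GL2"
    using assms by (auto simp: gmap_eq_image)
next
  fix L assume "L \<in> (\<lambda>A. cubic_act A ` S) ` GL2"
  then obtain a b c d where "a * d - b * c \<noteq> 0" and "L = cubic_act (a, b, c, d) ` S"
    by (auto simp: GL2_def)
  then have "gmap a b c d \<in> Gq" and "L = gmap a b c d S"
    using assms by (simp_all add: gmap_in_Gq gmap_eq_image)
  then show "L \<in> Gorbit S"
    unfolding Gorbit_def by blast
qed

section \<open>The twisted cubic and its osculating planes\<close>

text \<open>Points and osculating planes are indexed by homogeneous parameters (x, y), with t = x / y;
  the parameter (1, 0) gives P(1,0,0,0) and the plane x3 = 0.\<close>

fun cubic_vec :: "'a::field \<times> 'a \<Rightarrow> 'a vec4" where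
  "cubic_vec (x, y) = (x^3, x^2 * y, x * y^2, y^3)"

fun osc_coeffs :: "'a::field \<times> 'a \<Rightarrow> 'a vec4" where
  "osc_coeffs (x, y) = (y^3, - 3 * x * y^2, 3 * x^2 * y, - (x^3))"

lemma cubic_act_cubic_vec: "cubic_act A (cubic_vec v) = cubic_vec (mat2_apply A v)"
  by (cases A rule: prod_cases4; cases v)
     (simp add: cubic_act_expand algebra_simps power2_eq_square power3_eq_cube)

lemma dot4_osc_coeffs_cubic_act:
  "dot4 (osc_coeffs (mat2_apply A v)) (cubic_act A z) = mat2_det A ^ 3 * dot4 (osc_coeffs v) z"
  by (cases A rule: prod_cases4; cases v; cases z rule: prod_cases4)
     (simp add: cubic_act_expand algebra_simps power2_eq_square power3_eq_cube)

lemma cubic_vec_scale: "cubic_vec (k * x, k * y) = smul (k^3) (cubic_vec (x, y))"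
  by (simp add: algebra_simps power2_eq_square power3_eq_cube)

lemma osc_coeffs_scale: "osc_coeffs (k * x, k * y) = smul (k^3) (osc_coeffs (x, y))"
  by (simp add: algebra_simps power2_eq_square power3_eq_cube)

lemma nonzero_pair_cases:
  fixes v :: "'a::field \<times> 'a"
  assumes "v \<noteq> (0, 0)"
  obtains k t where "k \<noteq> 0" "v = (k * t, k * 1)" | k where "k \<noteq> 0" "v = (k * 1, k * 0)"
proof (cases v)
  case (Pair x y)
  show ?thesis
  proof (cases "y = 0")
    case True
    then show ?thesis using that(2)[of x] assms Pair by simp
  next
    case False
    then show ?thesis using that(1)[of y "x / y"] Pair by simp
  qed
qed

lemma cubic_points_eq: "cubic_points = (\<lambda>v. pt (cubic_vec v)) ` {v. v \<noteq> (0, 0)}"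
proof (intro equalityI subsetI)
  fix P :: "'a vec4 set" assume "P \<in> cubic_points"
  then consider t where "P = pt (cubic_vec (t, 1))" | "P = pt (cubic_vec (1, 0))"
    unfolding cubic_points_def by auto
  then show "P \<in> (\<lambda>v. pt (cubic_vec v)) ` {v. v \<noteq> (0, 0)}"
    by cases (rule image_eqI, assumption, simp)+
next
  fix P :: "'a vec4 set" assume "P \<in> (\<lambda>v. pt (cubic_vec v)) ` {v. v \<noteq> (0, 0)}"
  then obtain v where P: "P = pt (cubic_vec v)" and "v \<noteq> (0, 0)" by blast
  from \<open>v \<noteq> (0, 0)\<close> consider k t where "k \<noteq> 0" "v = (k * t, k * 1)"
    | k where "k \<noteq> 0" "v = (k * 1, k * 0)"
    by (rule nonzero_pair_cases)
  then show "P \<in> cubic_points"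
  proof cases
    case (1 k t)
    have "cubic_vec v = smul (k^3) (cubic_vec (t, 1))"
      by (simp only: 1(2) cubic_vec_scale)
    then have "P = pt (cubic_vec (t, 1))"
      using 1(1) by (simp add: P pt_smul del: cubic_vec.simps)
    then show ?thesis unfolding cubic_points_def by auto
  next
    case (2 k)
    have "cubic_vec v = smul (k^3) (cubic_vec (1, 0))"
      by (simp only: 2(2) cubic_vec_scale)
    then have "P = pt (cubic_vec (1, 0))"
      using 2(1) by (simp add: P pt_smul del: cubic_vec.simps)
    then show ?thesis unfolding cubic_points_def by auto
  qed
qed

lemma osc_planes_eq: "osc_planes = (\<lambda>v. plane (osc_coeffs v)) ` {v. v \<noteq> (0, 0)}"
proof (intro equalityI subsetI)
  have "plane (0, 0, 0, 1) = plane (osc_coeffs (1, 0::'a))"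
    using plane_smul[of "-1" "(0, 0, 0, 1) :: 'a vec4"] by simp
  moreover fix \<pi> :: "'a vec4 set" assume "\<pi> \<in> osc_planes"
  ultimately consider t where "\<pi> = plane (osc_coeffs (t, 1))" | "\<pi> = plane (osc_coeffs (1, 0))"
    unfolding osc_planes_def by auto
  then show "\<pi> \<in> (\<lambda>v. plane (osc_coeffs v)) ` {v. v \<noteq> (0, 0)}"
    by cases (rule image_eqI, assumption, simp)+
next
  fix \<pi> :: "'a vec4 set" assume "\<pi> \<in> (\<lambda>v. plane (osc_coeffs v)) ` {v. v \<noteq> (0, 0)}"
  then obtain v where \<pi>: "\<pi> = plane (osc_coeffs v)" and "v \<noteq> (0, 0)" by blast
  from \<open>v \<noteq> (0, 0)\<close> consider k t where "k \<noteq> 0" "v = (k * t, k * 1)"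
    | k where "k \<noteq> 0" "v = (k * 1, k * 0)"
    by (rule nonzero_pair_cases)
  then show "\<pi> \<in> osc_planes"
  proof cases
    case (1 k t)
    have "osc_coeffs v = smul (k^3) (osc_coeffs (t, 1))"
      by (simp only: 1(2) osc_coeffs_scale)
    then have "\<pi> = plane (osc_coeffs (t, 1))"
      using 1(1) by (simp add: \<pi> plane_smul del: osc_coeffs.simps)
    then show ?thesis unfolding osc_planes_def by auto
  next
    case (2 k)
    have "osc_coeffs v = smul (- (k^3)) (0, 0, 0, 1)"
      using 2(2) by simp
    then have "\<pi> = plane (0, 0, 0, 1)"
      using 2(1) plane_smul[of "- (k^3)" "(0, 0, 0, 1)"] by (simp add: \<pi> del: osc_coeffs.simps)
    then show ?thesis unfolding osc_planes_def by auto
  qed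
qed

lemma pt_cubic_vec_in_cubic_points: "v \<noteq> (0, 0) \<Longrightarrow> pt (cubic_vec v) \<in> cubic_points"
  unfolding cubic_points_eq by blast

lemma plane_osc_coeffs_in_osc_planes: "v \<noteq> (0, 0) \<Longrightarrow> plane (osc_coeffs v) \<in> osc_planes"
  unfolding osc_planes_eq by blast

lemma image_cubic_act_cubic_points:
  assumes "A \<in> GL2" and "P \<in> cubic_points"
  shows "cubic_act A ` P \<in> cubic_points"
proof -
  obtain v where "P = pt (cubic_vec v)" and "v \<noteq> (0, 0)"
    using assms(2) unfolding cubic_points_eq by blast
  then show ?thesis
    using assms(1) by (simp add: image_cubic_act_pt cubic_act_cubic_vec mat2_apply_eq_0_iff
        pt_cubic_vec_in_cubic_points del: cubic_vec.simps)
qed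

lemma image_cubic_act_osc_plane:
  assumes "A \<in> GL2" and "\<pi> \<in> osc_planes"
  shows "\<exists>\<pi>'\<in>osc_planes. cubic_act A ` \<pi> \<subseteq> \<pi>'"
proof -
  obtain v where \<pi>: "\<pi> = plane (osc_coeffs v)" and "v \<noteq> (0, 0)"
    using assms(2) unfolding osc_planes_eq by blast
  then have "plane (osc_coeffs (mat2_apply A v)) \<in> osc_planes"
    using assms(1) by (simp add: plane_osc_coeffs_in_osc_planes mat2_apply_eq_0_iff del: osc_coeffs.simps)
  moreover have "cubic_act A ` \<pi> \<subseteq> plane (osc_coeffs (mat2_apply A v))"
    unfolding \<pi> plane_def by (auto simp: dot4_osc_coeffs_cubic_act simp del: osc_coeffs.simps)
  ultimately show ?thesis by blast
qed

lemma image_cubic_act_lines: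
  assumes "A \<in> GL2" and "L \<in> lines"
  shows "cubic_act A ` L \<in> lines"
proof -
  obtain u v where L: "L = span2 u v" and "indep2 u v"
    using assms(2) unfolding lines_def by blast
  have "indep2 (cubic_act A u) (cubic_act A v)"
    unfolding indep2_def
  proof (intro allI impI)
    fix s t assume "vadd (smul s (cubic_act A u)) (smul t (cubic_act A v)) = vzero"
    then have "cubic_act A (vadd (smul s u) (smul t v)) = cubic_act A vzero"
      by (simp add: cubic_act_vadd cubic_act_smul cubic_act_vzero)
    then have "vadd (smul s u) (smul t v) = vzero"
      using inj_cubic_act[OF assms(1)] by (simp add: inj_eq)
    then show "s = 0 \<and> t = 0"
      using \<open>indep2 u v\<close> unfolding indep2_def by blast
  qed
  then show ?thesis
    unfolding lines_def L image_cubic_act_span2 by blast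
qed

lemma cubic_points_on_image:
  assumes "A \<in> GL2"
  shows "{Q \<in> cubic_points. Q \<subseteq> cubic_act A ` L} = image (cubic_act A) ` {P \<in> cubic_points. P \<subseteq> L}"
proof (intro equalityI subsetI)
  fix Q assume "Q \<in> {Q \<in> cubic_points. Q \<subseteq> cubic_act A ` L}"
  then have Q: "Q \<in> cubic_points" "Q \<subseteq> cubic_act A ` L" by simp_all
  define P where "P = cubic_act (mat2_inv A) ` Q"
  have "P \<in> cubic_points"
    unfolding P_def using mat2_inv_GL2[OF assms] Q(1) by (rule image_cubic_act_cubic_points)
  moreover have "P \<subseteq> cubic_act (mat2_inv A) ` cubic_act A ` L"
    unfolding P_def using Q(2) by (rule image_mono)
  then have "P \<subseteq> L"
    by (simp only: image_cubic_act_inv_left[OF assms])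
  ultimately have "P \<in> {P \<in> cubic_points. P \<subseteq> L}" by simp
  moreover have "Q = cubic_act A ` P"
    unfolding P_def image_cubic_act_inv_right[OF assms] ..
  ultimately show "Q \<in> image (cubic_act A) ` {P \<in> cubic_points. P \<subseteq> L}"
    by (intro image_eqI)
next
  fix Q assume "Q \<in> image (cubic_act A) ` {P \<in> cubic_points. P \<subseteq> L}"
  then obtain P where "P \<in> cubic_points" "P \<subseteq> L" "Q = cubic_act A ` P" by auto
  then show "Q \<in> {Q \<in> cubic_points. Q \<subseteq> cubic_act A ` L}"
    using image_cubic_act_cubic_points[OF assms] by auto
qed

lemma image_cubic_act_UnGamma_lines:
  assumes "A \<in> GL2" and "L \<in> UnGamma_lines"
  shows "cubic_act A ` L \<in> UnGamma_lines"
proof -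
  have L: "L \<in> lines" "card {P \<in> cubic_points. P \<subseteq> L} = 1" "\<forall>\<pi>\<in>osc_planes. \<not> L \<subseteq> \<pi>"
    using assms(2) unfolding UnGamma_lines_def by simp_all
  have "inj_on (image (cubic_act A)) {P \<in> cubic_points. P \<subseteq> L}"
    using inj_cubic_act[OF assms(1)] by (simp add: inj_on_def inj_image_eq_iff)
  then have "card {Q \<in> cubic_points. Q \<subseteq> cubic_act A ` L} = 1"
    using L(2) by (simp add: cubic_points_on_image[OF assms(1)] card_image)
  moreover have "\<not> cubic_act A ` L \<subseteq> \<pi>" if \<pi>: "\<pi> \<in> osc_planes" for \<pi>
  proof
    assume "cubic_act A ` L \<subseteq> \<pi>"
    then have "cubic_act (mat2_inv A) ` cubic_act A ` L \<subseteq> cubic_act (mat2_inv A) ` \<pi>"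
      by (rule image_mono)
    then have "L \<subseteq> cubic_act (mat2_inv A) ` \<pi>"
      by (simp only: image_cubic_act_inv_left[OF assms(1)])
    moreover obtain \<pi>' where "\<pi>' \<in> osc_planes" "cubic_act (mat2_inv A) ` \<pi> \<subseteq> \<pi>'"
      using image_cubic_act_osc_plane[OF mat2_inv_GL2[OF assms(1)] \<pi>] by blast
    ultimately show False
      using L(3) by blast
  qed
  ultimately show ?thesis
    unfolding UnGamma_lines_def using image_cubic_act_lines[OF assms(1) L(1)] by blast
qed

section \<open>UnGamma-lines through P0\<close>

definition base_line :: "'a::field \<Rightarrow> 'a vec4 set" where
  "base_line r = span2 (0, 0, 0, 1) (1, 0, r, 0)"

lemma base_line_in_subspaces: "base_line r \<in> subspaces"
  unfolding base_line_def by (rule span2_in_subspaces)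

lemma mem_span2_P0:
  "(x0, x1, x2, x3) \<in> span2 (0, 0, 0, 1) (1, v1, v2, 0) \<longleftrightarrow> x1 = x0 * v1 \<and> x2 = x0 * v2"
proof
  assume "(x0, x1, x2, x3) \<in> span2 (0, 0, 0, 1) (1, v1, v2, 0)"
  then obtain a b where "(x0, x1, x2, x3) = vadd (smul a (0, 0, 0, 1)) (smul b (1, v1, v2, 0))"
    unfolding mem_span2 by blast
  then show "x1 = x0 * v1 \<and> x2 = x0 * v2" by simp
next
  assume "x1 = x0 * v1 \<and> x2 = x0 * v2"
  then have "(x0, x1, x2, x3) = vadd (smul x3 (0, 0, 0, 1)) (smul x0 (1, v1, v2, 0))" by simp
  then show "(x0, x1, x2, x3) \<in> span2 (0, 0, 0, 1) (1, v1, v2, 0)"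
    unfolding mem_span2 by blast
qed

lemma pt_P0_in_cubic_points: "pt (0, 0, 0, 1) \<in> cubic_points"
  using pt_cubic_vec_in_cubic_points[of "(0, 1)"] by simp

lemma cubic_points_on_span2_P0:
  assumes "v2 \<noteq> v1^2"
  shows "{P \<in> cubic_points. P \<subseteq> span2 (0, 0, 0, 1) (1, v1, v2, 0)} = {pt (0, 0, 0, 1)}"
proof (intro equalityI subsetI)
  let ?L = "span2 (0, 0, 0, 1) (1, v1, v2, 0)"
  fix P assume "P \<in> {P \<in> cubic_points. P \<subseteq> ?L}"
  then have P: "P \<in> cubic_points" "P \<subseteq> ?L" by simp_all
  obtain v where "P = pt (cubic_vec v)" "v \<noteq> (0, 0)"
    using P(1) unfolding cubic_points_eq by blast
  then obtain x y where xy: "P = pt (cubic_vec (x, y))" "(x, y) \<noteq> (0, 0)"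
    by (cases v) blast
  have "cubic_vec (x, y) \<in> ?L"
    using P(2) pt_subset_iff[OF span2_in_subspaces] xy(1) by blast
  then have e: "x^2 * y = x^3 * v1" "x * y^2 = x^3 * v2"
    by (simp_all add: mem_span2_P0)
  have "x = 0"
  proof (rule ccontr)
    assume "x \<noteq> 0"
    then have "y = x * v1"
      using e(1) by (simp add: power2_eq_square power3_eq_cube)
    then have "x^3 * v1^2 = x^3 * v2"
      using e(2) by (simp add: algebra_simps power2_eq_square power3_eq_cube)
    then show False
      using \<open>x \<noteq> 0\<close> assms by simp
  qed
  with xy have "y \<noteq> 0" and "cubic_vec (x, y) = smul (y^3) (0, 0, 0, 1)"
    by simp_all
  then have "P = pt (smul (y^3) (0, 0, 0, 1))"
    using xy(1) by (simp only:)
  also have "\<dots> = pt (0, 0, 0, 1)"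
    using \<open>y \<noteq> 0\<close> by (intro pt_smul) simp
  finally show "P \<in> {pt (0, 0, 0, 1)}"
    by simp
next
  have "pt (0, 0, 0, 1) \<subseteq> span2 (0, 0, 0, 1) (1, v1, v2, 0)"
    unfolding pt_subset_iff[OF span2_in_subspaces] mem_span2_P0 by simp
  then show "P \<in> {P \<in> cubic_points. P \<subseteq> span2 (0, 0, 0, 1) (1, v1, v2, 0)}"
    if "P \<in> {pt (0, 0, 0, 1)}" for P
    using that pt_P0_in_cubic_points by simp
qed

lemma span2_P0_in_UnGamma_lines:
  assumes "v2 \<noteq> v1^2"
  shows "span2 (0, 0, 0, 1) (1, v1, v2, 0) \<in> UnGamma_lines"
proof -
  let ?L = "span2 (0, 0, 0, 1) (1, v1, v2, 0)"
  have "indep2 (0, 0, 0, 1) (1, v1, v2, 0)"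
    unfolding indep2_def by (simp add: vzero_def)
  then have "?L \<in> lines"
    unfolding lines_def by blast
  moreover have "\<not> ?L \<subseteq> \<pi>" if \<pi>_osc: "\<pi> \<in> osc_planes" for \<pi>
  proof
    assume "?L \<subseteq> \<pi>"
    obtain v where "\<pi> = plane (osc_coeffs v)" "v \<noteq> (0, 0)"
      using \<pi>_osc unfolding osc_planes_eq by blast
    then obtain x y where \<pi>: "\<pi> = plane (osc_coeffs (x, y))" and "(x, y) \<noteq> (0, 0)"
      by (cases v) blast
    have "(0, 0, 0, 1) \<in> ?L" "(1, v1, v2, 0) \<in> ?L"
      by (simp_all add: mem_span2_P0)
    then have "dot4 (osc_coeffs (x, y)) (0, 0, 0, 1) = 0" "dot4 (osc_coeffs (x, y)) (1, v1, v2, 0) = 0"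
      using \<open>?L \<subseteq> \<pi>\<close> unfolding \<pi> plane_def by auto
    then show False
      using \<open>(x, y) \<noteq> (0, 0)\<close> by simp
  qed
  ultimately show ?thesis
    unfolding UnGamma_lines_def using cubic_points_on_span2_P0[OF assms] by simp
qed

lemma base_line_in_UnGamma_lines: "r \<noteq> 0 \<Longrightarrow> base_line r \<in> UnGamma_lines"
  unfolding base_line_def by (rule span2_P0_in_UnGamma_lines) simp

lemma line_through_point:
  assumes "L \<in> lines" and "p \<in> L" and "p \<noteq> vzero"
  obtains w where "L = span2 p w"
proof -
  obtain u w where L: "L = span2 u w" and "indep2 u w"
    using assms(1) unfolding lines_def by blast
  obtain a b where ab: "p = vadd (smul a u) (smul b w)"
    using assms(2) unfolding L mem_span2 by blast
  show ?thesis
  proof (cases "b = 0")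
    case False
    have "L = span2 (smul 1 u) (vadd (smul b w) (smul a u))"
      unfolding L by (rule span2_change_basis[symmetric]) (use False in simp_all)
    also have "\<dots> = span2 u p"
      using ab by (simp add: vadd_commute)
    finally show ?thesis
      using span2_commute that by metis
  next
    case True
    then have "a \<noteq> 0"
      using ab assms(3) by (cases u rule: prod_cases4; cases w rule: prod_cases4) (auto simp: vzero_def)
    have "L = span2 (smul 1 w) (vadd (smul a u) (smul b w))"
      unfolding L span2_commute[of u] by (rule span2_change_basis[symmetric]) (use \<open>a \<noteq> 0\<close> in simp_all)
    also have "\<dots> = span2 w p"
      using ab by simp
    finally show ?thesis
      using span2_commute that by metis
  qed
qed

lemma line_through_P0:
  assumes "L \<in> lines" and "(0, 0, 0, 1) \<in> L" and "\<not> L \<subseteq> plane (1, 0, 0, 0)"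
  obtains v1 v2 where "L = span2 (0, 0, 0, 1) (1, v1, v2, 0)"
proof -
  obtain w where L: "L = span2 (0, 0, 0, 1) w"
    using assms(1,2) by (rule line_through_point) (simp add: vzero_def)
  obtain w0 w1 w2 w3 where w: "w = (w0, w1, w2, w3)"
    by (cases w rule: prod_cases4)
  have "w0 \<noteq> 0"
  proof
    assume "w0 = 0"
    have "L \<subseteq> plane (1, 0, 0, 0)"
    proof
      fix x assume "x \<in> L"
      then obtain a b where "x = vadd (smul a (0, 0, 0, 1)) (smul b (0, w1, w2, w3))"
        unfolding L w mem_span2 \<open>w0 = 0\<close> by blast
      then show "x \<in> plane (1, 0, 0, 0)"
        by (simp add: plane_def)
    qed
    with assms(3) show False ..
  qed
  have "span2 (smul 1 (0, 0, 0, 1)) (vadd (smul w0 (1, w1 / w0, w2 / w0, 0)) (smul w3 (0, 0, 0, 1)))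
      = span2 (0, 0, 0, 1) (1, w1 / w0, w2 / w0, 0)"
    using \<open>w0 \<noteq> 0\<close> by (intro span2_change_basis) simp_all
  then have "L = span2 (0, 0, 0, 1) (1, w1 / w0, w2 / w0, 0)"
    using \<open>w0 \<noteq> 0\<close> by (simp add: L w)
  then show ?thesis
    by (rule that)
qed

lemma UnGamma_line_through_P0:
  assumes "L \<in> UnGamma_lines" and "(0, 0, 0, 1) \<in> L"
  obtains v1 v2 where "v2 \<noteq> v1^2" and "L = span2 (0, 0, 0, 1) (1, v1, v2, 0)"
proof -
  have L: "L \<in> lines" "card {P \<in> cubic_points. P \<subseteq> L} = 1" "\<forall>\<pi>\<in>osc_planes. \<not> L \<subseteq> \<pi>"
    using assms(1) unfolding UnGamma_lines_def by simp_all
  have "\<not> L \<subseteq> plane (1, 0, 0, 0)"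
    using L(3) plane_osc_coeffs_in_osc_planes[of "(0, 1)"] by auto
  with L(1) assms(2) obtain v1 v2 where L_eq: "L = span2 (0, 0, 0, 1) (1, v1, v2, 0)"
    by (rule line_through_P0)
  have "v2 \<noteq> v1^2"
  proof
    assume "v2 = v1^2"
    have L_sub: "L \<in> subspaces"
      using L(1) by (rule lines_subspaces)
    have "cubic_vec (1, v1) \<in> L"
      using \<open>v2 = v1^2\<close> by (simp add: L_eq mem_span2_P0 power2_eq_square)
    then have "pt (cubic_vec (1, v1)) \<in> {P \<in> cubic_points. P \<subseteq> L}"
      using pt_subset_iff[OF L_sub] pt_cubic_vec_in_cubic_points[of "(1, v1)"] by simp
    moreover have "pt (0, 0, 0, 1) \<in> {P \<in> cubic_points. P \<subseteq> L}"
      using pt_P0_in_cubic_points pt_subset_iff[OF L_sub] assms(2) by simp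
    moreover obtain X where "{P \<in> cubic_points. P \<subseteq> L} = {X}"
      using L(2) by (rule card_1_singletonE)
    moreover have "pt (cubic_vec (1, v1)) \<noteq> pt (0, 0, 0, 1)"
    proof
      assume "pt (cubic_vec (1, v1)) = pt (0, 0, 0, 1)"
      then have "cubic_vec (1, v1) \<in> pt (0, 0, 0, 1)"
        using pt_self by metis
      then show False
        unfolding mem_pt by auto
    qed
    ultimately show False
      by simp
  qed
  then show ?thesis
    using L_eq by (rule that)
qed

lemma cubic_act_P0: "cubic_act (a, b, c, d) (0, 0, 0, 1) = (b^3, b^2 * d, b * d^2, d^3)"
  by (simp add: cubic_act_expand)

lemma cubic_act_base_point:
  "cubic_act (a, b, c, d) (1, 0, r, 0) =
     (a^3 + r * (3*a*b^2), a^2*c + r * (b^2*c + 2*a*b*d), a*c^2 + r * (a*d^2 + 2*b*c*d), c^3 + r * (3*c*d^2))"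
  by (simp add: cubic_act_expand algebra_simps)

lemma image_base_line_lower_triangular:
  assumes "e \<noteq> 0"
  shows "cubic_act (1, 0, v1, e) ` base_line r = span2 (0, 0, 0, 1) (1, v1, v1^2 + r * e^2, 0)"
proof -
  have "cubic_act (1, 0, v1, e) (0, 0, 0, 1) = smul (e^3) (0, 0, 0, 1)"
    by (simp add: cubic_act_P0)
  moreover have "cubic_act (1, 0, v1, e) (1, 0, r, 0) =
      vadd (smul 1 (1, v1, v1^2 + r * e^2, 0)) (smul (v1^3 + r * (3 * v1 * e^2)) (0, 0, 0, 1))"
    by (simp add: cubic_act_base_point algebra_simps)
  ultimately have "cubic_act (1, 0, v1, e) ` base_line r =
      span2 (smul (e^3) (0, 0, 0, 1))
        (vadd (smul 1 (1, v1, v1^2 + r * e^2, 0)) (smul (v1^3 + r * (3 * v1 * e^2)) (0, 0, 0, 1)))"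
    unfolding base_line_def image_cubic_act_span2 by (simp only:)
  also have "\<dots> = span2 (0, 0, 0, 1) (1, v1, v1^2 + r * e^2, 0)"
    using assms by (intro span2_change_basis) simp_all
  finally show ?thesis .
qed

text \<open>The image of P0 is the cubic point with parameter (b, d), which lies on a base line only if
  b = 0; then the image of P(1,0,r,0) forces c = 0.\<close>

lemma image_base_line_subset:
  assumes "(a, b, c, d) \<in> GL2" and "r' \<noteq> 0"
    and "cubic_act (a, b, c, d) ` base_line r \<subseteq> base_line r'"
  shows "b = 0 \<and> c = 0 \<and> r * d^2 = r' * a^2"
proof -
  have "(0, 0, 0, 1) \<in> base_line r" "(1, 0, r, 0) \<in> base_line r"
    unfolding base_line_def by (simp_all add: mem_span2_P0)
  then have "cubic_act (a, b, c, d) (0, 0, 0, 1) \<in> base_line r'"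
    and "cubic_act (a, b, c, d) (1, 0, r, 0) \<in> base_line r'"
    using assms(3) by blast+
  then have P0: "b^2 * d = 0" "b * d^2 = b^3 * r'"
    and base: "a^2 * c + r * (b^2 * c + 2*a*b*d) = 0"
      "a * c^2 + r * (a * d^2 + 2*b*c*d) = (a^3 + r * (3*a*b^2)) * r'"
    unfolding base_line_def cubic_act_P0 cubic_act_base_point mem_span2_P0 by simp_all
  have "b = 0"
    using P0 assms(2) by (cases "d = 0") simp_all
  then have "a \<noteq> 0" and "d \<noteq> 0"
    using assms(1) by auto
  with base \<open>b = 0\<close> have "c = 0"
    by simp
  with base \<open>b = 0\<close> have "a * (r * d^2) = a * (r' * a^2)"
    by (simp add: algebra_simps power2_eq_square power3_eq_cube)
  then show ?thesis
    using \<open>a \<noteq> 0\<close> \<open>b = 0\<close> \<open>c = 0\<close> by simp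
qed

lemma P0_to_cubic_point:
  fixes v :: "'a::field \<times> 'a"
  assumes "v \<noteq> (0, 0)"
  obtains B where "B \<in> GL2" and "cubic_act B (0, 0, 0, 1) = cubic_vec v"
proof (cases v)
  case (Pair x y)
  define B :: "'a mat2" where "B = (if y \<noteq> 0 then (1, x, 0, y) else (0, x, 1, y))"
  have "B \<in> GL2"
    using assms Pair by (auto simp: B_def)
  moreover have "cubic_act B (cubic_vec (0, 1)) = cubic_vec v"
    unfolding cubic_act_cubic_vec Pair by (simp add: B_def del: cubic_vec.simps)
  ultimately show ?thesis
    using that by simp
qed

section \<open>Orbits and stabilisers\<close>

lemma UnGamma_line_in_base_orbit:
  fixes \<rho> :: "'a::{field,finite}"
  assumes "odd CARD('a)" and "\<not> (\<exists>x. x^2 = \<rho>)" and L: "L \<in> UnGamma_lines"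
  obtains r A where "r \<in> {1, \<rho>}" and "A \<in> GL2" and "L = cubic_act A ` base_line r"
proof -
  have "card {P \<in> cubic_points. P \<subseteq> L} = 1"
    using L unfolding UnGamma_lines_def by simp
  then obtain P where "{P \<in> cubic_points. P \<subseteq> L} = {P}"
    by (rule card_1_singletonE)
  then have "P \<in> cubic_points" and "P \<subseteq> L"
    by blast+
  then obtain v where "v \<noteq> (0, 0)" and "cubic_vec v \<in> L"
    unfolding cubic_points_eq using pt_self by blast
  obtain B where B: "B \<in> GL2" "cubic_act B (0, 0, 0, 1) = cubic_vec v"
    using \<open>v \<noteq> (0, 0)\<close> by (rule P0_to_cubic_point)
  define L' where "L' = cubic_act (mat2_inv B) ` L"
  have L'_UnGamma: "L' \<in> UnGamma_lines"
    unfolding L'_def using mat2_inv_GL2[OF B(1)] L by (rule image_cubic_act_UnGamma_lines)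
  have "(0, 0, 0, 1) = cubic_act (mat2_inv B) (cubic_vec v)"
    using cubic_act_inv_left[OF B(1)] B(2) by metis
  then have "(0, 0, 0, 1) \<in> L'"
    unfolding L'_def using \<open>cubic_vec v \<in> L\<close> by blast
  with L'_UnGamma obtain v1 v2 where "v2 \<noteq> v1^2" and L': "L' = span2 (0, 0, 0, 1) (1, v1, v2, 0)"
    by (rule UnGamma_line_through_P0)
  then have "v2 - v1^2 \<noteq> 0" by simp
  with assms(1,2) obtain r e where r: "r \<in> {1, \<rho>}" and "e \<noteq> 0" and "v2 - v1^2 = r * e^2"
    by (rule square_class_cases)
  then have "L' = cubic_act (1, 0, v1, e) ` base_line r"
    by (simp add: L' image_base_line_lower_triangular algebra_simps)
  then have "L = cubic_act (mat2_mult B (1, 0, v1, e)) ` base_line r"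
    using image_cubic_act_inv_right[OF B(1), of L] by (simp add: L'_def image_cubic_act_mult)
  moreover have "mat2_mult B (1, 0, v1, e) \<in> GL2"
    using B(1) \<open>e \<noteq> 0\<close> by (simp add: mat2_mult_GL2)
  ultimately show ?thesis
    using r by (rule_tac that)
qed

lemma UnGamma_lines_eq_Gorbits:
  fixes \<rho> :: "'a::{field,finite}"
  assumes "odd CARD('a)" and "\<not> (\<exists>x. x^2 = \<rho>)"
  shows "UnGamma_lines = Gorbit (base_line 1) \<union> Gorbit (base_line \<rho>)"
proof (intro equalityI subsetI)
  fix L assume "L \<in> (UnGamma_lines :: 'a vec4 set set)"
  with assms obtain r A where "r \<in> {1, \<rho>}" and "A \<in> GL2" and "L = cubic_act A ` base_line r"
    by (rule UnGamma_line_in_base_orbit)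
  then show "L \<in> Gorbit (base_line 1) \<union> Gorbit (base_line \<rho>)"
    unfolding Gorbit_eq_image[OF base_line_in_subspaces] by blast
next
  fix L assume "L \<in> Gorbit (base_line 1) \<union> Gorbit (base_line \<rho>)"
  then obtain r where "r \<in> {1, \<rho>}" and "L \<in> Gorbit (base_line r)"
    by blast
  then obtain A where "r \<noteq> 0" and "A \<in> GL2" and "L = cubic_act A ` base_line r"
    using nonsquare_neq_zero[OF assms(2)] unfolding Gorbit_eq_image[OF base_line_in_subspaces] by auto
  then show "L \<in> UnGamma_lines"
    by (simp add: image_cubic_act_UnGamma_lines base_line_in_UnGamma_lines)
qed

lemma Gorbit_base_lines_disjoint:
  assumes "\<not> (\<exists>x. x^2 = (\<rho>::'a::field))"
  shows "Gorbit (base_line 1) \<inter> Gorbit (base_line \<rho>) = {}"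
proof (rule ccontr)
  assume "Gorbit (base_line 1) \<inter> Gorbit (base_line \<rho>) \<noteq> {}"
  then obtain A B where "A \<in> GL2" "B \<in> GL2" and AB: "cubic_act A ` base_line 1 = cubic_act B ` base_line \<rho>"
    unfolding Gorbit_eq_image[OF base_line_in_subspaces] by blast
  define C where "C = mat2_mult (mat2_inv B) A"
  obtain a b c d where C_eq: "C = (a, b, c, d)"
    by (cases C rule: prod_cases4)
  have "C \<in> GL2"
    unfolding C_def using mat2_inv_GL2[OF \<open>B \<in> GL2\<close>] \<open>A \<in> GL2\<close> by (rule mat2_mult_GL2)
  moreover have "cubic_act C ` base_line 1 = base_line \<rho>"
    unfolding C_def image_cubic_act_mult AB image_cubic_act_inv_left[OF \<open>B \<in> GL2\<close>] ..
  ultimately have "b = 0 \<and> c = 0 \<and> 1 * d^2 = \<rho> * a^2"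
    using nonsquare_neq_zero[OF assms] by (intro image_base_line_subset) (simp_all add: C_eq)
  moreover have "a \<noteq> 0"
    using \<open>C \<in> GL2\<close> calculation by (auto simp: C_eq)
  ultimately have "(d / a)^2 = \<rho>"
    by (simp add: power_divide)
  with assms show False
    by blast
qed

definition sign_diag_mats :: "'a::field mat2 set" where
  "sign_diag_mats = (\<lambda>(k, e). (k, 0, 0, e * k)) ` ((UNIV - {0}) \<times> {1, - 1})"

lemma base_line_stabiliser:
  assumes "r \<noteq> 0"
  shows "A \<in> GL2 \<and> cubic_act A ` base_line r = base_line r \<longleftrightarrow> A \<in> sign_diag_mats"
proof
  assume A: "A \<in> GL2 \<and> cubic_act A ` base_line r = base_line r"
  obtain a b c d where A_eq: "A = (a, b, c, d)"
    by (cases A rule: prod_cases4)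
  have "b = 0 \<and> c = 0 \<and> r * d^2 = r * a^2"
    using A assms by (intro image_base_line_subset) (simp_all add: A_eq)
  then have "b = 0" "c = 0" "d = a \<or> d = - a"
    using assms by (simp_all add: power2_eq_iff)
  moreover have "a \<noteq> 0"
    using A \<open>b = 0\<close> by (simp add: A_eq)
  ultimately have "A = (\<lambda>(k, e). (k, 0, 0, e * k)) (a, d / a)" and "(a, d / a) \<in> (UNIV - {0}) \<times> {1, - 1}"
    by (auto simp: A_eq)
  then show "A \<in> sign_diag_mats"
    unfolding sign_diag_mats_def by (rule image_eqI)
next
  assume "A \<in> sign_diag_mats"
  then obtain k e where A: "A = (k, 0, 0, e * k)" and "k \<noteq> 0" and e: "e = 1 \<or> e = - 1"
    unfolding sign_diag_mats_def by auto
  then have "e \<noteq> 0" and "e^2 = 1"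
    by auto
  have "cubic_act A (0, 0, 0, 1) = smul ((e * k)^3) (0, 0, 0, 1)"
    by (simp add: A cubic_act_P0)
  moreover have "cubic_act A (1, 0, r, 0) = vadd (smul (k^3) (1, 0, r, 0)) (smul 0 (0, 0, 0, 1))"
    using \<open>e^2 = 1\<close> by (simp add: A cubic_act_base_point algebra_simps power2_eq_square power3_eq_cube)
  ultimately have "cubic_act A ` base_line r =
      span2 (smul ((e * k)^3) (0, 0, 0, 1)) (vadd (smul (k^3) (1, 0, r, 0)) (smul 0 (0, 0, 0, 1)))"
    unfolding base_line_def image_cubic_act_span2 by (simp only:)
  also have "\<dots> = base_line r"
    unfolding base_line_def using \<open>k \<noteq> 0\<close> \<open>e \<noteq> 0\<close> by (intro span2_change_basis) simp_all
  finally show "A \<in> GL2 \<and> cubic_act A ` base_line r = base_line r"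
    using \<open>k \<noteq> 0\<close> \<open>e \<noteq> 0\<close> by (simp add: A)
qed

lemma card_sign_diag_mats:
  assumes "(2::'a::{field,finite}) \<noteq> 0"
  shows "card (sign_diag_mats :: 'a mat2 set) = 2 * (CARD('a) - 1)"
proof -
  have "(1::'a) \<noteq> - 1"
    using assms by (simp add: eq_neg_iff_add_eq_0 one_add_one)
  moreover have "inj_on (\<lambda>(k, e). (k::'a, 0::'a, 0::'a, e * k)) ((UNIV - {0}) \<times> UNIV)"
    by (auto simp: inj_on_def)
  then have "inj_on (\<lambda>(k, e). (k::'a, 0::'a, 0::'a, e * k)) ((UNIV - {0}) \<times> {1, - 1})"
    by (rule inj_on_subset) blast
  ultimately show ?thesis
    unfolding sign_diag_mats_def by (simp add: card_image card_cartesian_product card_Diff_subset)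
qed

lemma base_orbit_fibre:
  assumes "r \<noteq> 0" and "A0 \<in> GL2"
  shows "{A \<in> GL2. cubic_act A ` base_line r = cubic_act A0 ` base_line r} = mat2_mult A0 ` sign_diag_mats"
proof (intro equalityI subsetI)
  fix A assume "A \<in> {A \<in> GL2. cubic_act A ` base_line r = cubic_act A0 ` base_line r}"
  then have A: "A \<in> GL2" "cubic_act A ` base_line r = cubic_act A0 ` base_line r"
    by simp_all
  define \<sigma> where "\<sigma> = mat2_mult (mat2_inv A0) A"
  have "\<sigma> \<in> GL2"
    unfolding \<sigma>_def using mat2_inv_GL2[OF assms(2)] A(1) by (rule mat2_mult_GL2)
  moreover have "cubic_act \<sigma> ` base_line r = base_line r"
    unfolding \<sigma>_def image_cubic_act_mult A(2) image_cubic_act_inv_left[OF assms(2)] ..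
  ultimately have "\<sigma> \<in> sign_diag_mats"
    using base_line_stabiliser[OF assms(1)] by blast
  moreover have "A = mat2_mult A0 \<sigma>"
    unfolding \<sigma>_def by (simp add: mat2_mult_assoc[symmetric] mat2_mult_inv[OF assms(2)] mat2_mult_one_left)
  ultimately show "A \<in> mat2_mult A0 ` sign_diag_mats"
    by blast
next
  fix A assume "A \<in> mat2_mult A0 ` sign_diag_mats"
  then obtain \<sigma> where "\<sigma> \<in> sign_diag_mats" and A: "A = mat2_mult A0 \<sigma>"
    by blast
  then have "\<sigma> \<in> GL2" and "cubic_act \<sigma> ` base_line r = base_line r"
    using base_line_stabiliser[OF assms(1)] by blast+
  then show "A \<in> {A \<in> GL2. cubic_act A ` base_line r = cubic_act A0 ` base_line r}"
    using assms(2) by (simp add: A mat2_mult_GL2 image_cubic_act_mult)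
qed

lemma card_GL2_eq_mult_card_Gorbit:
  assumes "(2::'a::{field,finite}) \<noteq> 0" and "r \<noteq> (0::'a)"
  shows "card (GL2 :: 'a mat2 set) = 2 * (CARD('a) - 1) * card (Gorbit (base_line r))"
  unfolding Gorbit_eq_image[OF base_line_in_subspaces]
proof (rule card_eq_mult_card_image)
  fix A0 :: "'a mat2" assume "A0 \<in> GL2"
  then have "card {A \<in> GL2. cubic_act A ` base_line r = cubic_act A0 ` base_line r} = card (sign_diag_mats :: 'a mat2 set)"
    unfolding base_orbit_fibre[OF assms(2) \<open>A0 \<in> GL2\<close>]
    using inj_mat2_mult[OF \<open>A0 \<in> GL2\<close>] by (simp add: card_image inj_on_subset)
  then show "card {A \<in> GL2. cubic_act A ` base_line r = cubic_act A0 ` base_line r} = 2 * (CARD('a) - 1)"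
    using card_sign_diag_mats[OF assms(1)] by simp
qed simp

lemma card_Gorbit_base_line:
  assumes "odd CARD('a::{field,finite})" and "r \<noteq> (0::'a)"
  shows "card (Gorbit (base_line r)) = (CARD('a)^3 - CARD('a)) div 2"
proof -
  let ?q = "CARD('a)"
  have "?q \<ge> 2"
    using card_mono[of "UNIV :: 'a set" "{0, 1}"] by simp
  have "(?q - 1) * (?q^3 - ?q) = (?q^2 - ?q) * (?q^2 - 1)"
    by (simp add: power2_eq_square power3_eq_cube diff_mult_distrib diff_mult_distrib2 algebra_simps)
  also have "\<dots> = (?q - 1) * (2 * card (Gorbit (base_line r)))"
    using card_GL2_eq_mult_card_Gorbit[OF two_neq_zero_if_odd_card[OF assms(1)] assms(2)]
    by (simp add: card_GL2)
  finally show ?thesis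
    using \<open>?q \<ge> 2\<close> by simp
qed

text \<open>Scalar matrices act trivially on subspaces.\<close>

lemma gmap_scalar_mult:
  assumes "k \<noteq> 0"
  shows "gmap k 0 0 (e * k) = gmap 1 0 0 (e::'a::field)"
proof
  fix S :: "'a vec4 set"
  show "gmap k 0 0 (e * k) S = gmap 1 0 0 e S"
  proof (cases "S \<in> subspaces")
    case True
    have "gmap k 0 0 (e * k) S = cubic_act (mat2_mult (1, 0, 0, e) (k, 0, 0, k)) ` S"
      using True by (simp add: gmap_eq_image)
    also have "\<dots> = cubic_act (1, 0, 0, e) ` smul (k^3) ` S"
      unfolding image_cubic_act_mult by (simp add: cubic_act_scalar image_image)
    also have "\<dots> = gmap 1 0 0 e S"
      using True assms by (simp add: smul_image_subspace gmap_eq_image)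
    finally show ?thesis .
  qed (simp add: gmap_def)
qed

lemma Gstab_base_line:
  assumes "r \<noteq> 0"
  shows "Gstab (base_line r) = {gmap 1 0 0 1, gmap 1 0 0 (- 1)}"
proof (intro equalityI subsetI)
  fix \<phi> assume "\<phi> \<in> Gstab (base_line r)"
  then obtain a b c d where "(a, b, c, d) \<in> GL2" and \<phi>: "\<phi> = gmap a b c d"
    and "gmap a b c d (base_line r) = base_line r"
    unfolding Gstab_def Gq_def by auto
  then have "(a, b, c, d) \<in> sign_diag_mats"
    using base_line_stabiliser[OF assms, of "(a, b, c, d)"]
    by (simp add: gmap_eq_image base_line_in_subspaces)
  then obtain k e where "k \<noteq> 0" "e = 1 \<or> e = - 1" and "(a, b, c, d) = (k, 0, 0, e * k)"
    unfolding sign_diag_mats_def by auto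
  then show "\<phi> \<in> {gmap 1 0 0 1, gmap 1 0 0 (- 1)}"
    using gmap_scalar_mult[of k e] by (auto simp: \<phi>)
next
  fix \<phi> assume "\<phi> \<in> {gmap 1 0 0 1, gmap 1 0 0 (- 1::'a)}"
  then obtain e where \<phi>: "\<phi> = gmap 1 0 0 e" and "(1, 0, 0, e * 1) \<in> sign_diag_mats"
    unfolding sign_diag_mats_def by force
  then have "(1, 0, 0, e) \<in> GL2 \<and> cubic_act (1, 0, 0, e) ` base_line r = base_line r"
    by (simp only: mult_1_right base_line_stabiliser[OF assms])
  then show "\<phi> \<in> Gstab (base_line r)"
    unfolding Gstab_def using gmap_in_Gq[of 1 0 0 e] by (simp add: \<phi> gmap_eq_image base_line_in_subspaces)
qed

lemma gmap_sign_distinct: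
  assumes "(2::'a::field) \<noteq> 0"
  shows "gmap 1 0 0 1 \<noteq> gmap 1 0 0 (- 1::'a)"
proof
  assume eq: "gmap 1 0 0 1 = gmap 1 0 0 (- 1::'a)"
  have "gmap 1 0 0 1 (pt (1, 1, 0, 0)) = pt (1, 1, 0, 0::'a)"
    by (simp add: gmap_eq_image pt_in_subspaces image_cubic_act_pt cubic_act_one)
  moreover have "gmap 1 0 0 (- 1) (pt (1, 1, 0, 0)) = pt (1, - 1, 0, 0::'a)"
    by (simp add: gmap_eq_image pt_in_subspaces image_cubic_act_pt cubic_act_expand)
  ultimately have "(1, 1, 0, 0::'a) \<in> pt (1, - 1, 0, 0)"
    using eq pt_self by metis
  then obtain c where "1 = c" and "1 = - (c::'a)"
    unfolding mem_pt by auto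
  then show False
    using assms by (simp add: eq_neg_iff_add_eq_0 one_add_one)
qed

theorem theorem6p7:
  fixes q :: nat and \<rho> :: "'a::{field,finite}"
  assumes "CARD('a) = q" and "odd q" and "q \<ge> 5"
    and "\<not> (\<exists>x. x^2 = \<rho>)"
  defines "P0 \<equiv> (0, 0, 0, 1) :: 'a vec4"
  defines "l1 \<equiv> span2 P0 (1, 0, 1, 0)"
    and "l2 \<equiv> span2 P0 (1, 0, \<rho>, 0)"
  shows "(UnGamma_lines :: 'a vec4 set set) = Gorbit l1 \<union> Gorbit l2
    \<and> Gorbit l1 \<inter> Gorbit l2 = {}
    \<and> card (Gorbit l1) = (q^3 - q) div 2
    \<and> card (Gorbit l2) = (q^3 - q) div 2
    \<and> Gstab l1 = Gstab l2
    \<and> card (Gstab l1) = 2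
    \<and> (\<forall>\<phi>\<in>Gstab l1. \<exists>d\<in>{1, -1}. \<phi> = gmap 1 0 0 d)"
proof -
  have odd: "odd CARD('a)" and "\<rho> \<noteq> 0" and two: "(2::'a) \<noteq> 0"
    using assms(1,2,4) nonsquare_neq_zero two_neq_zero_if_odd_card by auto
  have l1: "l1 = base_line 1" and l2: "l2 = base_line \<rho>"
    unfolding l1_def l2_def P0_def base_line_def by simp_all
  have "Gstab l1 = {gmap 1 0 0 1, gmap 1 0 0 (- 1)}" and "Gstab l2 = Gstab l1"
    unfolding l1 l2 using \<open>\<rho> \<noteq> 0\<close> by (simp_all add: Gstab_base_line)
  then show ?thesis
    unfolding l1 l2 assms(1)[symmetric]
    using UnGamma_lines_eq_Gorbits[OF odd assms(4)] Gorbit_base_lines_disjoint[OF assms(4)]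
      card_Gorbit_base_line[OF odd] gmap_sign_distinct[OF two] \<open>\<rho> \<noteq> 0\<close>
    by simp
qed

end
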